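(* Let $E$, $D$, $S$ be binary random variables taking values in $\{0,1\}$ such that every joint cell probability $P(E=e,D=d,S=s)$ is positive, and write $p(d,e)=P(S=1\mid D=d,E=e)$ and $o(d,e)=p(d,e)/(1-p(d,e))$. Define the interaction measures $$I_{OR}=\frac{o(1,1)\,o(0,0)}{o(1,0)\,o(0,1)},\quad I_{RR}=\frac{p(1,1)\,p(0,0)}{p(1,0)\,p(0,1)},\quad I_{RD}=p(1,1)+p(0,0)-p(1,0)-p(0,1).$$ (a) Suppose that at least one of $I_{OR}\le 1$, $I_{RR}\le 1$, $I_{RD}\le 0$ holds (non-positive interaction of $E$ and $D$ on $S$ on the odds ratio, risk ratio, or risk difference scale, respectively), and that $p(d,e)$ is non-decreasing in both $d$ and $e$, or non-increasing in both $d$ and $e$. Then $\mathrm{OR}_{ED\mid S=1}\le \mathrm{OR}_{ED}$. (b) Suppose that at least one of $I_{OR}\ge 1$, $I_{RR}\ge 1$, $I_{RD}\ge 0$ holds (non-negative interaction on the corresponding scale), and that $p(d,e)$ is non-decreasing in one of $d,e$ and non-increasing in the other. Then $\mathrm{OR}_{ED\mid S=1}\ge \mathrm{OR}_{ED}$.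
   Context: For binary random variables $A,B$ and a random variable $C$, $\mathrm{OR}_{AB\mid C=c}=\frac{P(A=1,B=1\mid C=c)P(A=0,B=0\mid C=c)}{P(A=1,B=0\mid C=c)P(A=0,B=1\mid C=c)}$ and $\mathrm{OR}_{AB}$ is the unconditional version. "Non-decreasing in $d$" means $p(1,e)\ge p(0,e)$ for each $e\in\{0,1\}$; "non-decreasing in $e$" means $p(d,1)\ge p(d,0)$ for each $d\in\{0,1\}$; non-increasing analogously. *)

theory Defs
  imports Complex_Main
begin

text \<open>A joint distribution of binary random variables E, D, S is given by its cell
  probabilities q e d s = P(E=e, D=d, S=s), for e, d, s in {0,1}.\<close>

definition is_joint_dist :: "(nat \<Rightarrow> nat \<Rightarrow> nat \<Rightarrow> real) \<Rightarrow> bool" where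
  "is_joint_dist q \<longleftrightarrow> (\<forall>e\<in>{0,1}. \<forall>d\<in>{0,1}. \<forall>s\<in>{0,1}. q e d s > 0)
     \<and> (\<Sum>e\<in>{0,1::nat}. \<Sum>d\<in>{0,1::nat}. \<Sum>s\<in>{0,1::nat}. q e d s) = 1"

definition P_ED :: "(nat \<Rightarrow> nat \<Rightarrow> nat \<Rightarrow> real) \<Rightarrow> nat \<Rightarrow> nat \<Rightarrow> real" where
  "P_ED q e d = (\<Sum>s\<in>{0,1::nat}. q e d s)"

definition P_S :: "(nat \<Rightarrow> nat \<Rightarrow> nat \<Rightarrow> real) \<Rightarrow> nat \<Rightarrow> real" where
  "P_S q s = (\<Sum>e\<in>{0,1::nat}. \<Sum>d\<in>{0,1::nat}. q e d s)"

definition pS :: "(nat \<Rightarrow> nat \<Rightarrow> nat \<Rightarrow> real) \<Rightarrow> nat \<Rightarrow> nat \<Rightarrow> real" where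
  "pS q d e = q e d 1 / P_ED q e d"

definition oS :: "(nat \<Rightarrow> nat \<Rightarrow> nat \<Rightarrow> real) \<Rightarrow> nat \<Rightarrow> nat \<Rightarrow> real" where
  "oS q d e = pS q d e / (1 - pS q d e)"

definition I_OR :: "(nat \<Rightarrow> nat \<Rightarrow> nat \<Rightarrow> real) \<Rightarrow> real" where
  "I_OR q = (oS q 1 1 * oS q 0 0) / (oS q 1 0 * oS q 0 1)"

definition I_RR :: "(nat \<Rightarrow> nat \<Rightarrow> nat \<Rightarrow> real) \<Rightarrow> real" where
  "I_RR q = (pS q 1 1 * pS q 0 0) / (pS q 1 0 * pS q 0 1)"

definition I_RD :: "(nat \<Rightarrow> nat \<Rightarrow> nat \<Rightarrow> real) \<Rightarrow> real" where
  "I_RD q = pS q 1 1 + pS q 0 0 - pS q 1 0 - pS q 0 1"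

definition OR_ED :: "(nat \<Rightarrow> nat \<Rightarrow> nat \<Rightarrow> real) \<Rightarrow> real" where
  "OR_ED q = (P_ED q 1 1 * P_ED q 0 0) / (P_ED q 1 0 * P_ED q 0 1)"

definition P_ED_given_S :: "(nat \<Rightarrow> nat \<Rightarrow> nat \<Rightarrow> real) \<Rightarrow> nat \<Rightarrow> nat \<Rightarrow> nat \<Rightarrow> real" where
  "P_ED_given_S q e d s = q e d s / P_S q s"

definition OR_ED_given_S :: "(nat \<Rightarrow> nat \<Rightarrow> nat \<Rightarrow> real) \<Rightarrow> nat \<Rightarrow> real" where
  "OR_ED_given_S q s = (P_ED_given_S q 1 1 s * P_ED_given_S q 0 0 s)
                     / (P_ED_given_S q 1 0 s * P_ED_given_S q 0 1 s)"

definition nondec_d :: "(nat \<Rightarrow> nat \<Rightarrow> real) \<Rightarrow> bool" where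
  "nondec_d p \<longleftrightarrow> (\<forall>e\<in>{0,1}. p 1 e \<ge> p 0 e)"
definition nondec_e :: "(nat \<Rightarrow> nat \<Rightarrow> real) \<Rightarrow> bool" where
  "nondec_e p \<longleftrightarrow> (\<forall>d\<in>{0,1}. p d 1 \<ge> p d 0)"
definition noninc_d :: "(nat \<Rightarrow> nat \<Rightarrow> real) \<Rightarrow> bool" where
  "noninc_d p \<longleftrightarrow> (\<forall>e\<in>{0,1}. p 1 e \<le> p 0 e)"
definition noninc_e :: "(nat \<Rightarrow> nat \<Rightarrow> real) \<Rightarrow> bool" where
  "noninc_e p \<longleftrightarrow> (\<forall>d\<in>{0,1}. p d 1 \<le> p d 0)"

end

theory Submission
  imports Defs
begin

text \<open>Conditioning on \<open>S = 1\<close> reweights the cell \<open>(e, d)\<close> by \<open>p(d,e)\<close>, so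
  \<open>OR(E, D | S = 1) = I_RR \<cdot> OR(E, D)\<close> and both parts reduce to comparing \<open>I_RR\<close> with 1.
  Write \<open>a b\<close> for the risks \<open>p(1,1), p(0,0)\<close> and \<open>c d\<close> for \<open>p(1,0), p(0,1)\<close>.
  Concordant monotonicity puts the smallest risk \<open>m\<close> among \<open>a, b\<close>, and then
  \<open>a b - c d = (a + b - c - d) m - (c - m)(d - m)\<close>:
  a non-positive risk difference forces \<open>a b \<le> c d\<close> directly, and so does an odds-ratio
  interaction \<open>\<le> 1\<close>, because \<open>a b > c d\<close> would give \<open>(1 - a)(1 - b) < (1 - c)(1 - d)\<close>.
  Discordant monotonicity is the same argument with the roles of \<open>a, b\<close> and \<open>c, d\<close> swapped.\<close>

definition odds :: "real \<Rightarrow> real" where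
  "odds p = p / (1 - p)"

lemma mult_diff_le_add_diff_mult_min:
  fixes a b c d :: real
  assumes "min a b \<le> min c d"
  shows "a * b - c * d \<le> (a + b - c - d) * min a b"
proof -
  have "a * b - c * d - (a + b - c - d) * min a b = - ((c - min a b) * (d - min a b))"
    by (cases "a \<le> b") (simp_all add: min_def algebra_simps)
  moreover have "(c - min a b) * (d - min a b) \<ge> 0"
    using assms by simp
  ultimately show ?thesis by linarith
qed

lemma mult_le_mult_if_add_le:
  fixes a b c d :: real
  assumes "0 \<le> min a b" "min a b \<le> min c d" "a + b \<le> c + d"
  shows "a * b \<le> c * d"
proof -
  have "(a + b - c - d) * min a b \<le> 0"
    using assms(1,3) by (simp add: mult_nonpos_nonneg)
  with mult_diff_le_add_diff_mult_min[OF assms(2)] show ?thesis by linarith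
qed

lemma mult_le_mult_if_odds_mult_le:
  fixes a b c d :: real
  assumes "a \<in> {0<..<1}" "b \<in> {0<..<1}" "c \<in> {0<..<1}" "d \<in> {0<..<1}"
    and min_le: "min a b \<le> min c d"
    and odds_le: "odds a * odds b \<le> odds c * odds d"
  shows "a * b \<le> c * d"
proof (rule ccontr)
  assume "\<not> a * b \<le> c * d"
  then have gt: "c * d < a * b" by simp
  have m: "0 < min a b" "min a b < 1"
    using assms(1,2) by auto
  have diff_le: "a * b - c * d \<le> (a + b - c - d) * min a b"
    using mult_diff_le_add_diff_mult_min[OF min_le] .
  with gt have "0 < (a + b - c - d) * min a b" by linarith
  then have "0 < a + b - c - d"
    using m(1) by (rule zero_less_mult_pos2)
  with m(2) have "(a + b - c - d) * min a b < a + b - c - d"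
    by simp
  with diff_le have "(1 - a) * (1 - b) < (1 - c) * (1 - d)"
    by (simp add: algebra_simps)
  then have "c * d / ((1 - c) * (1 - d)) < a * b / ((1 - a) * (1 - b))"
    using assms(1-4) gt by (intro frac_less2) auto
  with odds_le show False
    by (simp add: odds_def)
qed

lemma min_le_min_if_concordant:
  fixes p :: "nat \<Rightarrow> nat \<Rightarrow> real"
  assumes "(nondec_d p \<and> nondec_e p) \<or> (noninc_d p \<and> noninc_e p)"
  shows "min (p 1 1) (p 0 0) \<le> min (p 1 0) (p 0 1)"
  using assms unfolding nondec_d_def nondec_e_def noninc_d_def noninc_e_def by auto

lemma min_le_min_if_discordant:
  fixes p :: "nat \<Rightarrow> nat \<Rightarrow> real"
  assumes "(nondec_d p \<and> noninc_e p) \<or> (noninc_d p \<and> nondec_e p)"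
  shows "min (p 1 0) (p 0 1) \<le> min (p 1 1) (p 0 0)"
  using assms unfolding nondec_d_def nondec_e_def noninc_d_def noninc_e_def by auto

lemma joint_dist_pos:
  assumes "is_joint_dist q" "e \<in> {0, 1}" "d \<in> {0, 1}" "s \<in> {0, 1}"
  shows "0 < q e d s"
  using assms unfolding is_joint_dist_def by blast

lemma P_ED_pos:
  assumes "is_joint_dist q" "e \<in> {0, 1}" "d \<in> {0, 1}"
  shows "0 < P_ED q e d"
  using joint_dist_pos[OF assms, of 0] joint_dist_pos[OF assms, of 1]
  by (simp add: P_ED_def)

lemma pS_bounds:
  assumes "is_joint_dist q" "e \<in> {0, 1}" "d \<in> {0, 1}"
  shows "pS q d e \<in> {0<..<1}"
  using joint_dist_pos[OF assms, of 0] joint_dist_pos[OF assms, of 1]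
  by (simp add: pS_def P_ED_def field_simps)

lemma odds_pS_pos:
  assumes "is_joint_dist q" "e \<in> {0, 1}" "d \<in> {0, 1}"
  shows "0 < odds (pS q d e)"
  using pS_bounds[OF assms] by (simp add: odds_def)

lemma OR_ED_pos:
  assumes "is_joint_dist q"
  shows "0 < OR_ED q"
  using P_ED_pos[OF assms] by (simp add: OR_ED_def)

lemma OR_ED_given_S_1_eq:
  assumes "is_joint_dist q"
  shows "OR_ED_given_S q 1 = I_RR q * OR_ED q"
proof -
  have cell: "q e d 1 = pS q d e * P_ED q e d" if "e \<in> {0, 1}" "d \<in> {0, 1}" for e d
    using P_ED_pos[OF assms that] by (simp add: pS_def)
  then have cells: "q 1 1 1 = pS q 1 1 * P_ED q 1 1" "q 0 0 1 = pS q 0 0 * P_ED q 0 0"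
      "q 1 0 1 = pS q 0 1 * P_ED q 1 0" "q 0 1 1 = pS q 1 0 * P_ED q 0 1"
    by simp_all
  have "0 < P_S q 1"
    using joint_dist_pos[OF assms, of _ _ 1] by (simp add: P_S_def add_pos_pos)
  moreover have "0 < pS q 1 0" "0 < pS q 0 1" "0 < P_ED q 1 0" "0 < P_ED q 0 1"
    using pS_bounds[OF assms] P_ED_pos[OF assms] by auto
  ultimately show ?thesis
    unfolding OR_ED_given_S_def P_ED_given_S_def I_RR_def OR_ED_def cells
    by (simp add: field_simps)
qed

lemma I_RR_le_1_if_nonpositive_interaction:
  assumes "is_joint_dist q"
    and min_le: "min (pS q 1 1) (pS q 0 0) \<le> min (pS q 1 0) (pS q 0 1)"
    and "I_OR q \<le> 1 \<or> I_RR q \<le> 1 \<or> I_RD q \<le> 0"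
  shows "I_RR q \<le> 1"
proof -
  have risks: "pS q 1 1 \<in> {0<..<1}" "pS q 0 0 \<in> {0<..<1}" "pS q 1 0 \<in> {0<..<1}" "pS q 0 1 \<in> {0<..<1}"
    using pS_bounds[OF assms(1)] by auto
  then have RR_iff: "I_RR q \<le> 1 \<longleftrightarrow> pS q 1 1 * pS q 0 0 \<le> pS q 1 0 * pS q 0 1"
    by (simp add: I_RR_def divide_le_eq_1_pos)
  have "odds (pS q 1 0) * odds (pS q 0 1) > 0"
    using odds_pS_pos[OF assms(1)] by simp
  then have OR_iff: "I_OR q \<le> 1 \<longleftrightarrow>
      odds (pS q 1 1) * odds (pS q 0 0) \<le> odds (pS q 1 0) * odds (pS q 0 1)"
    by (simp add: I_OR_def oS_def odds_def[symmetric] divide_le_eq_1_pos)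
  from assms(3) consider "I_OR q \<le> 1" | "I_RR q \<le> 1" | "I_RD q \<le> 0" by blast
  then show ?thesis
  proof cases
    case 1
    then show ?thesis
      using mult_le_mult_if_odds_mult_le[OF risks min_le] unfolding RR_iff OR_iff by blast
  next
    case 2
    then show ?thesis .
  next
    case 3
    then show ?thesis
      using mult_le_mult_if_add_le[OF _ min_le] risks unfolding RR_iff I_RD_def by simp
  qed
qed

lemma I_RR_ge_1_if_nonnegative_interaction:
  assumes "is_joint_dist q"
    and min_le: "min (pS q 1 0) (pS q 0 1) \<le> min (pS q 1 1) (pS q 0 0)"
    and "I_OR q \<ge> 1 \<or> I_RR q \<ge> 1 \<or> I_RD q \<ge> 0"
  shows "I_RR q \<ge> 1"
proof -
  have risks: "pS q 1 0 \<in> {0<..<1}" "pS q 0 1 \<in> {0<..<1}" "pS q 1 1 \<in> {0<..<1}" "pS q 0 0 \<in> {0<..<1}"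
    using pS_bounds[OF assms(1)] by auto
  then have RR_iff: "I_RR q \<ge> 1 \<longleftrightarrow> pS q 1 0 * pS q 0 1 \<le> pS q 1 1 * pS q 0 0"
    by (simp add: I_RR_def le_divide_eq_1_pos)
  have "odds (pS q 1 0) * odds (pS q 0 1) > 0"
    using odds_pS_pos[OF assms(1)] by simp
  then have OR_iff: "I_OR q \<ge> 1 \<longleftrightarrow>
      odds (pS q 1 0) * odds (pS q 0 1) \<le> odds (pS q 1 1) * odds (pS q 0 0)"
    by (simp add: I_OR_def oS_def odds_def[symmetric] le_divide_eq_1_pos)
  from assms(3) consider "I_OR q \<ge> 1" | "I_RR q \<ge> 1" | "I_RD q \<ge> 0" by blast
  then show ?thesis
  proof cases
    case 1
    then show ?thesis
      using mult_le_mult_if_odds_mult_le[OF risks min_le] unfolding RR_iff OR_iff by blast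
  next
    case 2
    then show ?thesis .
  next
    case 3
    then show ?thesis
      using mult_le_mult_if_add_le[OF _ min_le] risks unfolding RR_iff I_RD_def by simp
  qed
qed

theorem mainTheorem4:
  fixes q :: "nat \<Rightarrow> nat \<Rightarrow> nat \<Rightarrow> real"
  assumes "is_joint_dist q"
  shows "((I_OR q \<le> 1 \<or> I_RR q \<le> 1 \<or> I_RD q \<le> 0) \<and>
          ((nondec_d (pS q) \<and> nondec_e (pS q)) \<or> (noninc_d (pS q) \<and> noninc_e (pS q)))
          \<longrightarrow> OR_ED_given_S q 1 \<le> OR_ED q)
       \<and> ((I_OR q \<ge> 1 \<or> I_RR q \<ge> 1 \<or> I_RD q \<ge> 0) \<and>
          ((nondec_d (pS q) \<and> noninc_e (pS q)) \<or> (noninc_d (pS q) \<and> nondec_e (pS q)))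
          \<longrightarrow> OR_ED_given_S q 1 \<ge> OR_ED q)"
proof (intro conjI impI; elim conjE)
  assume "I_OR q \<le> 1 \<or> I_RR q \<le> 1 \<or> I_RD q \<le> 0"
    and "(nondec_d (pS q) \<and> nondec_e (pS q)) \<or> (noninc_d (pS q) \<and> noninc_e (pS q))"
  then have "I_RR q \<le> 1"
    using assms by (intro I_RR_le_1_if_nonpositive_interaction min_le_min_if_concordant)
  then show "OR_ED_given_S q 1 \<le> OR_ED q"
    using OR_ED_given_S_1_eq[OF assms] OR_ED_pos[OF assms] by (simp add: mult_le_cancel_right2)
next
  assume "I_OR q \<ge> 1 \<or> I_RR q \<ge> 1 \<or> I_RD q \<ge> 0"
    and "(nondec_d (pS q) \<and> noninc_e (pS q)) \<or> (noninc_d (pS q) \<and> nondec_e (pS q))"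
  then have "I_RR q \<ge> 1"
    using assms by (intro I_RR_ge_1_if_nonnegative_interaction min_le_min_if_discordant)
  then show "OR_ED_given_S q 1 \<ge> OR_ED q"
    using OR_ED_given_S_1_eq[OF assms] OR_ED_pos[OF assms] by (simp add: mult_le_cancel_right1)
qed

end
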